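(* Let $\mu\in(0,1)$ and let $\beta:[0,\infty)\to(0,\infty)$ be positive, bounded, non-increasing with $\lim_{a\to\infty}a\beta(a)=\mu$. Let $B(a)=\int_0^a\beta(s)\,ds$ and $W(\tau,b)=C(\tau)e^{-B(e^{\tau}b)}(1-b)^{\mu-1}$ for $\tau\ge0$, $b\in[0,1)$, with $C(\tau)>0$ such that $\int_0^1W(\tau,b)\,db=1$. Define $\delta(\tau)=\frac{C'(\tau)}{C(\tau)^2}-\frac{\mu}{C(\tau)}$. Then $W$ satisfies $$\partial_\tau W(\tau,b)+\partial_b((1-b)W(\tau,b))+e^{\tau}\beta(e^{\tau}b)W(\tau,b)=W(\tau,b)C(\tau)\delta(\tau),$$ $$W(\tau,0)(1+\delta(\tau))=\int_0^1e^{\tau}\beta(e^{\tau}b)W(\tau,b)\,db.$$ *)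

theory Defs
  imports "HOL-Analysis.Analysis"
begin

end

theory Submission
  imports Defs
begin

(* Write S = exp (- B) for the survival function, so that W tau b = C tau * S (e^tau b) * (1-b)^(mu-1).
   The normalisation says C = 1 / m with m tau = int_0^1 S (e^tau b) (1-b)^(mu-1) db.  Differentiating
   under the integral sign gives m' = - F with F tau = int_0^1 e^tau b beta (e^tau b) S (e^tau b)
   (1-b)^(mu-1) db, hence C' = F C^2 and delta = F - mu m; the transport equation is then a pointwise
   computation.  For the boundary condition split (1-b)^(mu-1) = b (1-b)^(mu-1) + (1-b)^mu; integrating
   the derivative of S (e^tau b) (1-b)^mu over [0,1] shows that the second part contributes 1 - mu m.
   As beta is only monotone, S is differentiable merely off the countable set of discontinuities of
   beta: dominated convergence copes with this for m', and the fundamental theorem of calculus is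
   proved with countably many exceptional points, via Sard's lemma in dimension one. *)

lemma countable_imp_negligible:
  fixes A :: "'a::euclidean_space set"
  assumes "countable A"
  shows "negligible A"
  using negligible_countable_Union[of "(\<lambda>x. {x}) ` A"] assms by auto

lemma integrable_on_one_minus_powr:
  assumes "a > -1"
  shows "(\<lambda>b::real. (1 - b) powr a) integrable_on {0..1}"
proof -
  have "(\<lambda>x::real. x powr a) integrable_on cbox 0 1"
    using integrable_on_powr_from_0[OF assms, of 1] by simp
  from integrable_affinity[OF this, of "-1" 1]
  have "(\<lambda>x. (- x + 1) powr a) integrable_on (\<lambda>x. - x + 1) ` cbox 0 1" by simp
  moreover have "(\<lambda>x::real. - x + 1) ` cbox 0 1 = {0..1}"
    by (auto simp: image_iff intro!: bexI[where x="1 - x" for x])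
  ultimately show ?thesis by (simp add: add.commute)
qed

lemma integrable_bounded_measurable_mult_one_minus_powr:
  fixes f :: "real \<Rightarrow> real"
  assumes "f \<in> borel_measurable (lebesgue_on {0..1})" "\<And>b. b \<in> {0..1} \<Longrightarrow> \<bar>f b\<bar> \<le> K"
    and "a > -1"
  shows "(\<lambda>b. f b * (1 - b) powr a) integrable_on {0..1}"
proof -
  have "bounded (f ` {0..1})"
    using assms(2) unfolding bounded_iff by (intro exI[of _ K]) auto
  moreover have "(\<lambda>b::real. (1 - b) powr a) absolutely_integrable_on {0..1}"
    by (rule nonnegative_absolutely_integrable_1[OF integrable_on_one_minus_powr[OF assms(3)]]) auto
  ultimately have "(\<lambda>b. f b * (1 - b) powr a) absolutely_integrable_on {0..1}"
    using assms(1) by (intro absolutely_integrable_bounded_measurable_product_real) auto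
  then show ?thesis
    using absolutely_integrable_on_def by blast
qed

lemma one_minus_powr_has_derivative:
  assumes "x < 1"
  shows "((\<lambda>s. (1 - s) powr a) has_real_derivative - (a * (1 - x) powr (a - 1))) (at x)"
proof -
  have "((\<lambda>z. z powr a) has_real_derivative a * (1 - x) powr (a - 1)) (at (1 - x))"
    using has_real_derivative_powr[of "1 - x" a] assms by simp
  moreover have "((\<lambda>s. 1 - s) has_real_derivative -1) (at x)"
    by (auto intro!: derivative_eq_intros)
  ultimately show ?thesis
    using DERIV_chain2[of "\<lambda>z. z powr a" _ "\<lambda>s. 1 - s"] by fastforce
qed

lemma negligible_image_zero_derivative:
  fixes F :: "real \<Rightarrow> real"
  assumes "\<And>x. x \<in> S \<Longrightarrow> (F has_real_derivative 0) (at x)"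
  shows "negligible (F ` S)"
proof -
  (* baby_Sard is stated for maps between spaces real^'n, hence the detour through real^1 *)
  define G where "G = (\<lambda>v::real^1. vec (F (v$1)) :: real^1)"
  have "negligible (G ` (vec ` S))"
  proof (rule baby_Sard)
    fix v :: "real^1" assume "v \<in> vec ` S"
    then have F': "(F has_derivative (\<lambda>h. 0)) (at (v$1))"
      using assms by (auto simp: has_field_derivative_def lambda_zero)
    have nth': "((\<lambda>v::real^1. v$1) has_derivative (\<lambda>v. v$1)) (at v within vec ` S)"
      by (intro bounded_linear_imp_has_derivative bounded_linear_vec_nth)
    have vec': "((\<lambda>y. vec y :: real^1) has_derivative (\<lambda>y. vec y)) (at (F (v$1)))"
      by (intro bounded_linear_imp_has_derivative linear_conv_bounded_linear[THEN iffD1] linear_vec)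
    have "((\<lambda>v. vec (F (v$1)) :: real^1) has_derivative (\<lambda>h. vec 0)) (at v within vec ` S)"
      using has_derivative_compose[OF has_derivative_compose[OF nth' F'] vec'] by simp
    then show "(G has_derivative (\<lambda>h. 0)) (at v within vec ` S)"
      by (simp add: G_def vec_0)
  next
    show "rank (matrix (\<lambda>h::real^1. 0::real^1)) < CARD(1)"
      by (simp add: rank_eq_0 matrix_def vec_eq_iff)
  qed simp
  then have "negligible ((\<lambda>v::real^1. v$1) ` G ` vec ` S)"
    by (rule negligible_differentiable_image_negligible[rotated])
       (auto intro!: bounded_linear_imp_differentiable_on bounded_linear_vec_nth)
  moreover have "(\<lambda>v::real^1. v$1) ` G ` vec ` S = F ` S"
    by (auto simp: G_def image_image)
  ultimately show ?thesis by simp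
qed

lemma has_real_derivative_zero_countable_imp_eq:
  fixes F :: "real \<Rightarrow> real"
  assumes "a \<le> b" "countable K" "continuous_on {a..b} F"
    and "\<And>x. x \<in> {a<..<b} - K \<Longrightarrow> (F has_real_derivative 0) (at x)"
  shows "F b = F a"
proof (rule ccontr)
  assume "F b \<noteq> F a"
  have "negligible (F ` ({a<..<b} - K))"
    using assms(4) by (rule negligible_image_zero_derivative)
  moreover have "negligible (F ` (K \<union> {a, b}))"
    using assms(2) by (intro countable_imp_negligible) auto
  moreover have "F ` {a..b} \<subseteq> F ` ({a<..<b} - K) \<union> F ` (K \<union> {a, b})"
  proof -
    have "{a..b} \<subseteq> ({a<..<b} - K) \<union> (K \<union> {a, b})"
      by auto
    then show ?thesis
      by blast
  qed
  ultimately have "negligible (F ` {a..b})"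
    using negligible_Un negligible_subset by blast
  moreover have "{min (F a) (F b)..max (F a) (F b)} \<subseteq> F ` {a..b}"
    using connected_contains_Icc[OF connected_continuous_image[OF assms(3)]] assms(1)
    by (auto simp: min_def max_def)
  ultimately have "negligible {min (F a) (F b)..max (F a) (F b)}"
    using negligible_subset by blast
  with \<open>F b \<noteq> F a\<close> show False
    using negligible_interval(1)[of "min (F a) (F b)" "max (F a) (F b)"]
    by (auto simp: min_def max_def split: if_splits)
qed

lemma fundamental_theorem_of_calculus_countable:
  fixes F f :: "real \<Rightarrow> real"
  assumes "a \<le> b" "countable K" "continuous_on {a..b} F" "f integrable_on {a..b}"
    and "\<And>x. x \<in> {a<..<b} - K \<Longrightarrow> (F has_real_derivative f x) (at x)"
    and "\<And>x. x \<in> {a<..<b} - K \<Longrightarrow> isCont f x"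
  shows "integral {a..b} f = F b - F a"
proof -
  define G where "G x = F x - integral {a..x} f" for x
  have "G b = G a"
  proof (rule has_real_derivative_zero_countable_imp_eq[OF assms(1,2)])
    show "continuous_on {a..b} G"
      unfolding G_def by (intro continuous_intros assms(3) indefinite_integral_continuous_1 assms(4))
    fix x assume x: "x \<in> {a<..<b} - K"
    have "((\<lambda>u. integral {a..u} f) has_vector_derivative f x) (at x within {a..b} - {})"
      using x assms(4,6) by (intro integral_has_vector_derivative_continuous_at)
        (auto intro: continuous_at_imp_continuous_within)
    then have "((\<lambda>u. integral {a..u} f) has_real_derivative f x) (at x)"
      using x by (simp add: has_real_derivative_iff_has_vector_derivative at_within_Icc_at)
    from DERIV_diff[OF assms(5)[OF x] this] show "(G has_real_derivative 0) (at x)"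
      unfolding G_def by simp
  qed
  then show ?thesis
    by (simp add: G_def)
qed

lemma abs_divide_le_of_abs_le_mult:
  fixes u h g :: real
  assumes "\<bar>u\<bar> \<le> g * \<bar>h\<bar>" "h \<noteq> 0"
  shows "\<bar>u / h\<bar> \<le> g"
  using assms by (simp add: abs_divide pos_divide_le_eq)

lemma has_real_derivative_integral_dominated:
  fixes f :: "real \<Rightarrow> 'a::euclidean_space \<Rightarrow> real"
  assumes "\<tau> \<in> T" and integrable: "\<And>t. t \<in> T \<Longrightarrow> f t integrable_on S"
    and "negligible N"
    and deriv: "\<And>x. x \<in> S - N \<Longrightarrow> ((\<lambda>t. f t x) has_real_derivative f' x) (at \<tau> within T)"
    and lipschitz: "\<And>t x. t \<in> T \<Longrightarrow> x \<in> S \<Longrightarrow> \<bar>f t x - f \<tau> x\<bar> \<le> g x * \<bar>t - \<tau>\<bar>"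
    and "g integrable_on S"
  shows "((\<lambda>t. integral S (f t)) has_real_derivative integral S f') (at \<tau> within T)"
  unfolding has_field_derivative_iff tendsto_at_iff_sequentially
proof (intro allI impI)
  fix X :: "nat \<Rightarrow> real" assume X: "\<forall>k. X k \<in> T - {\<tau>}" and "X \<longlonglongrightarrow> \<tau>"
  define q where
    "q k x = (if x \<in> N then 0 else (f (X k) x - f \<tau> x) / (X k - \<tau>))" for k x
  define f'' where "f'' x = (if x \<in> N then 0 else f' x)" for x
  have quotient_integrable: "(\<lambda>x. (f (X k) x - f \<tau> x) / (X k - \<tau>)) integrable_on S" for k
    using X assms(1) by (intro integrable_on_divide integrable_diff integrable) auto
  have "(\<lambda>k. integral S (q k)) \<longlonglongrightarrow> integral S f''"
  proof (rule dominated_convergence(2))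
    show "q k integrable_on S" for k
      by (rule integrable_spike[OF quotient_integrable \<open>negligible N\<close>]) (simp add: q_def)
    show "norm (q k x) \<le> g x" if "x \<in> S" for k x
    proof -
      have quotient_le: "\<bar>(f (X k) x - f \<tau> x) / (X k - \<tau>)\<bar> \<le> g x"
        using lipschitz[of "X k" x] X that by (intro abs_divide_le_of_abs_le_mult) auto
      then have "0 \<le> g x"
        by (rule order_trans[OF abs_ge_zero])
      with quotient_le show ?thesis
        by (simp add: q_def)
    qed
    show "(\<lambda>k. q k x) \<longlonglongrightarrow> f'' x" if "x \<in> S" for x
    proof (cases "x \<in> N")
      case False
      with deriv[of x] that have "((\<lambda>t. (f t x - f \<tau> x) / (t - \<tau>)) \<longlongrightarrow> f' x) (at \<tau> within T)"
        by (simp add: has_field_derivative_iff)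
      then have "((\<lambda>t. (f t x - f \<tau> x) / (t - \<tau>)) \<circ> X) \<longlonglongrightarrow> f' x"
        using X \<open>X \<longlonglongrightarrow> \<tau>\<close> unfolding tendsto_at_iff_sequentially by blast
      with False show ?thesis
        by (simp add: o_def q_def f''_def)
    qed (simp add: q_def f''_def)
  qed fact
  moreover have "integral S (q k) = (integral S (f (X k)) - integral S (f \<tau>)) / (X k - \<tau>)" for k
  proof -
    have "integral S (q k) = integral S (\<lambda>x. (f (X k) x - f \<tau> x) / (X k - \<tau>))"
      by (rule integral_spike[OF \<open>negligible N\<close>]) (simp add: q_def)
    also have "\<dots> = (integral S (f (X k)) - integral S (f \<tau>)) / (X k - \<tau>)"
      using X assms(1) by (simp add: integral_divide integral_diff integrable)
    finally show ?thesis .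
  qed
  moreover have "integral S f'' = integral S f'"
    by (rule integral_spike[OF \<open>negligible N\<close>]) (simp add: f''_def)
  ultimately show "((\<lambda>t. (integral S (f t) - integral S (f \<tau>)) / (t - \<tau>)) \<circ> X) \<longlonglongrightarrow> integral S f'"
    by (simp add: o_def)
qed

locale monotone_hazard =
  fixes \<beta> :: "real \<Rightarrow> real" and M :: real and B :: "real \<Rightarrow> real"
  assumes beta_pos: "\<And>a. 0 \<le> a \<Longrightarrow> 0 < \<beta> a"
    and beta_le: "\<And>a. 0 \<le> a \<Longrightarrow> \<beta> a \<le> M"
    and beta_antimono: "\<And>x y. 0 \<le> x \<Longrightarrow> x \<le> y \<Longrightarrow> \<beta> y \<le> \<beta> x"
    and B_eq_integral: "\<And>a. 0 \<le> a \<Longrightarrow> B a = integral {0..a} \<beta>"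
begin

definition surv :: "real \<Rightarrow> real"
  where "surv a = exp (- B a)"

lemma M_nonneg: "0 \<le> M"
  using beta_pos[of 0] beta_le[of 0] by simp

lemma beta_integrable:
  assumes "0 \<le> x"
  shows "\<beta> integrable_on {x..y}"
proof -
  have "mono_on {x..y} (\<lambda>t. - \<beta> t)"
    using assms by (auto simp: mono_on_def intro: beta_antimono)
  then have "(\<lambda>t. - (- \<beta> t)) integrable_on {x..y}"
    by (intro integrable_neg integrable_on_mono_on)
  then show ?thesis
    by simp
qed

lemma B_diff:
  assumes "0 \<le> x" "x \<le> y"
  shows "B y - B x = integral {x..y} \<beta>"
  using assms Henstock_Kurzweil_Integration.integral_combine[of 0 x y \<beta>] beta_integrable[of 0 y]
  by (simp add: B_eq_integral)

lemma B_0 [simp]: "B 0 = 0"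
  by (simp add: B_eq_integral)

lemma B_mono:
  assumes "0 \<le> x" "x \<le> y"
  shows "B x \<le> B y"
  using assms integral_nonneg[OF beta_integrable[of x y]] beta_pos
  by (fastforce simp: B_diff[OF assms, symmetric] less_imp_le)

lemma B_nonneg: "0 \<le> a \<Longrightarrow> 0 \<le> B a"
  using B_mono[of 0 a] by simp

lemma B_lipschitz: "M-lipschitz_on {0..} B"
proof -
  have "\<bar>B y - B x\<bar> \<le> M * \<bar>y - x\<bar>" if "0 \<le> x" "x \<le> y" for x y
  proof -
    have "integral {x..y} \<beta> \<le> integral {x..y} (\<lambda>_. M)"
      using that by (intro integral_le beta_integrable) (auto intro: beta_le)
    then have "B y - B x \<le> M * (y - x)"
      using that by (simp add: B_diff mult.commute)
    then show ?thesis
      using that B_mono[OF that] by simp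
  qed
  then have "\<bar>B y - B x\<bar> \<le> M * \<bar>y - x\<bar>" if "0 \<le> x" "0 \<le> y" for x y
    using that by (cases "x \<le> y") (force simp: abs_minus_commute)+
  then show ?thesis
    by (intro lipschitz_onI M_nonneg) (auto simp: dist_real_def)
qed

lemma surv_lipschitz: "M-lipschitz_on {0..} surv"
proof -
  have exp_lipschitz: "1-lipschitz_on {..0} (exp :: real \<Rightarrow> real)"
  proof (rule lipschitz_onI)
    fix x y :: real assume "x \<in> {..0}" "y \<in> {..0}"
    moreover have "(exp has_field_derivative exp z) (at z within {..0})" for z :: real
      by (rule DERIV_exp[THEN has_field_derivative_at_within])
    moreover have "norm (exp z) \<le> 1" if "z \<in> {..0}" for z :: real
      using that by simp
    ultimately have "norm (exp x - exp y) \<le> 1 * norm (x - y)"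
      by (intro field_differentiable_bound[of "{..0}" exp exp]) auto
    then show "dist (exp x) (exp y) \<le> 1 * dist x y"
      by (simp add: dist_norm)
  qed simp
  have "(\<lambda>a. - B a) ` {0..} \<subseteq> {..0}"
    by (simp add: image_subset_iff B_nonneg)
  then have "(1 * M)-lipschitz_on {0..} (\<lambda>a. exp (- B a))"
    using lipschitz_on_compose2[OF lipschitz_on_minus[OF B_lipschitz]
        lipschitz_on_subset[OF exp_lipschitz]]
    by blast
  then show ?thesis
    by (simp only: mult_1 surv_def[abs_def])
qed

lemma continuous_on_surv: "continuous_on {0..} surv"
  using surv_lipschitz by (rule lipschitz_on_continuous_on)

lemma surv_pos: "0 < surv a"
  by (simp add: surv_def)

lemma surv_le_1: "0 \<le> a \<Longrightarrow> surv a \<le> 1"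
  by (simp add: surv_def B_nonneg)

lemma surv_0 [simp]: "surv 0 = 1"
  by (simp add: surv_def)

lemma B_has_derivative:
  assumes "0 \<le> y" and "continuous (at y within {0..}) \<beta>"
  shows "(B has_real_derivative \<beta> y) (at y within {0..})"
proof -
  have at_eq: "at y within {0..} = at y within {0..y+1}"
    by (rule at_within_nhd[of _ "{..<y+1}"]) auto
  have "((\<lambda>u. integral {0..u} \<beta>) has_vector_derivative \<beta> y) (at y within {0..y+1} - {})"
    using assms at_eq by (intro integral_has_vector_derivative_continuous_at beta_integrable) auto
  then have "((\<lambda>u. integral {0..u} \<beta>) has_real_derivative \<beta> y) (at y within {0..y+1})"
    by (simp add: has_real_derivative_iff_has_vector_derivative)
  then have "(B has_real_derivative \<beta> y) (at y within {0..y+1})"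
    by (rule has_field_derivative_transform_within[where d=1]) (use assms B_eq_integral in auto)
  then show ?thesis
    using at_eq by simp
qed

lemma surv_has_derivative:
  assumes "0 \<le> y" and "continuous (at y within {0..}) \<beta>"
  shows "(surv has_real_derivative - \<beta> y * surv y) (at y within {0..})"
  unfolding surv_def[abs_def] using B_has_derivative[OF assms]
  by (auto intro!: derivative_eq_intros)

lemma surv_comp_has_derivative:
  assumes "(g has_real_derivative g') (at x within S)" and "g ` S \<subseteq> {0..}" "0 \<le> g x"
    and "continuous (at (g x) within {0..}) \<beta>"
  shows "((\<lambda>x. surv (g x)) has_real_derivative - \<beta> (g x) * surv (g x) * g') (at x within S)"
  using DERIV_image_chain[OF has_field_derivative_subset[OF surv_has_derivative] assms(1)] assms
  by (simp add: o_def)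

lemma surv_exp_scaled_has_derivative:
  assumes "0 \<le> b" "continuous (at (exp \<tau> * b) within {0..}) \<beta>"
  shows "((\<lambda>t. surv (exp t * b)) has_real_derivative
      - \<beta> (exp \<tau> * b) * surv (exp \<tau> * b) * (exp \<tau> * b)) (at \<tau> within S)"
  using assms
  by (intro surv_comp_has_derivative) (auto simp: image_subset_iff mult.commute intro!: derivative_eq_intros)

lemma countable_discontinuities_beta: "countable {y \<in> {0<..}. \<not> isCont \<beta> y}"
proof -
  have "mono_on {0<..} (\<lambda>t. - \<beta> t)"
    by (auto simp: mono_on_def intro: beta_antimono)
  then have "countable {y \<in> {0<..}. \<not> isCont (\<lambda>t. - \<beta> t) y}"
    by (intro mono_on_ctble_discont_open) auto
  then show ?thesis
    by (rule countable_subset[rotated]) (auto dest: continuous_minus)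
qed

lemma beta_scaled_measurable:
  assumes "0 \<le> c"
  shows "(\<lambda>b. \<beta> (c * b)) \<in> borel_measurable (lebesgue_on {0..1})"
proof -
  have "mono_on {0..1} (\<lambda>b. - \<beta> (c * b))"
    using assms by (auto simp: mono_on_def intro: beta_antimono mult_left_mono)
  then have "(\<lambda>b. - (- \<beta> (c * b))) integrable_on {0..1}"
    by (intro integrable_neg integrable_on_mono_on)
  then show ?thesis
    by (simp add: integrable_imp_measurable)
qed

lemma surv_scaled_measurable:
  assumes "0 \<le> c"
  shows "(\<lambda>b. surv (c * b)) \<in> borel_measurable (lebesgue_on {0..1})"
proof -
  have "continuous_on {0..1} (\<lambda>b. surv (c * b))"
    using assms by (intro continuous_on_compose2[OF continuous_on_surv] continuous_intros) auto
  then show ?thesis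
    by (intro continuous_imp_measurable_on_sets_lebesgue) auto
qed

lemma surv_scaled_integrable:
  assumes "0 \<le> c" "a > -1"
  shows "(\<lambda>b. surv (c * b) * (1 - b) powr a) integrable_on {0..1}"
  using assms surv_pos surv_le_1
  by (intro integrable_bounded_measurable_mult_one_minus_powr[where K=1] surv_scaled_measurable)
     (auto simp: less_imp_le)

lemma hazard_surv_integrable:
  assumes "0 \<le> c" "a > -1"
    and "f \<in> borel_measurable (lebesgue_on {0..1})" "\<And>b. b \<in> {0..1} \<Longrightarrow> \<bar>f b\<bar> \<le> K"
  shows "(\<lambda>b. c * \<beta> (c * b) * surv (c * b) * f b * (1 - b) powr a) integrable_on {0..1}"
proof (rule integrable_bounded_measurable_mult_one_minus_powr[where K = "c * M * K"])
  show "(\<lambda>b. c * \<beta> (c * b) * surv (c * b) * f b) \<in> borel_measurable (lebesgue_on {0..1})"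
    using beta_scaled_measurable surv_scaled_measurable assms by measurable
  fix b :: real assume b: "b \<in> {0..1}"
  have "0 \<le> c * b"
    using assms b by simp
  then have "\<beta> (c * b) * surv (c * b) * \<bar>f b\<bar> \<le> M * 1 * K"
    using beta_pos beta_le surv_pos surv_le_1 assms(4)[OF b] M_nonneg
    by (intro mult_mono) (auto simp: less_imp_le)
  then show "\<bar>c * \<beta> (c * b) * surv (c * b) * f b\<bar> \<le> c * M * K"
    using assms \<open>0 \<le> c * b\<close> beta_pos surv_pos
    by (simp add: abs_mult less_imp_le mult.assoc mult_left_mono)
qed (use assms in auto)

lemma isCont_beta_scaled:
  assumes "0 < c" "0 < x" "x \<notin> (\<lambda>y. y / c) ` {y \<in> {0<..}. \<not> isCont \<beta> y}"
  shows "isCont \<beta> (c * x)"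
proof -
  have "(\<lambda>y. y / c) (c * x) = x"
    using assms(1) by simp
  then show ?thesis
    using assms imageI[of "c * x" "{y \<in> {0<..}. \<not> isCont \<beta> y}" "\<lambda>y. y / c"] by auto
qed

lemma surv_exp_scaled_lipschitz:
  assumes "t \<in> {\<tau> - 1..\<tau> + 1}" "b \<in> {0..1}"
  shows "\<bar>surv (exp t * b) - surv (exp \<tau> * b)\<bar> \<le> M * exp (\<tau> + 1) * \<bar>t - \<tau>\<bar>"
proof -
  have "norm (exp t - exp \<tau>) \<le> exp (\<tau> + 1) * norm (t - \<tau>)"
    using assms(1) by (intro field_differentiable_bound[of "{\<tau> - 1..\<tau> + 1}" exp exp])
      (auto intro: DERIV_exp[THEN has_field_derivative_at_within])
  moreover have "b * \<bar>exp t - exp \<tau>\<bar> \<le> \<bar>exp t - exp \<tau>\<bar>"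
    using assms(2) by (intro mult_left_le_one_le) auto
  ultimately have exp_bound: "b * \<bar>exp t - exp \<tau>\<bar> \<le> exp (\<tau> + 1) * \<bar>t - \<tau>\<bar>"
    by simp
  have "\<bar>surv (exp t * b) - surv (exp \<tau> * b)\<bar> \<le> M * \<bar>exp t * b - exp \<tau> * b\<bar>"
    using lipschitz_onD[OF surv_lipschitz, of "exp t * b" "exp \<tau> * b"] assms(2)
    by (simp add: dist_real_def)
  also have "\<dots> = M * (b * \<bar>exp t - exp \<tau>\<bar>)"
    using assms(2) by (simp add: abs_mult right_diff_distrib[symmetric] mult.commute)
  also have "\<dots> \<le> M * exp (\<tau> + 1) * \<bar>t - \<tau>\<bar>"
    using exp_bound M_nonneg by (simp add: mult.assoc mult_left_mono)
  finally show ?thesis .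
qed

lemma surv_scaled_one_minus_powr_has_derivative:
  assumes "0 < c" "0 < x" "x < 1" "isCont \<beta> (c * x)"
  shows "((\<lambda>s. surv (c * s) * (1 - s) powr a) has_real_derivative
      - (c * \<beta> (c * x) * surv (c * x) * (1 - x) powr a + a * (surv (c * x) * (1 - x) powr (a - 1))))
      (at x)"
proof -
  have "((\<lambda>s. surv (c * s)) has_real_derivative - \<beta> (c * x) * surv (c * x) * c) (at x within {0<..<1})"
  proof (rule surv_comp_has_derivative)
    show "((\<lambda>s. c * s) has_real_derivative c) (at x within {0<..<1})"
      by (auto intro!: derivative_eq_intros)
    show "(\<lambda>s. c * s) ` {0<..<1} \<subseteq> {0..}"
      using assms(1) by (simp add: image_subset_iff)
    show "continuous (at (c * x) within {0..}) \<beta>"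
      using assms(4) by (rule continuous_at_imp_continuous_within)
  qed (use assms in simp)
  moreover have "at x within {0<..<1} = at x"
    using assms by (intro at_within_open) auto
  ultimately have "((\<lambda>s. surv (c * s)) has_real_derivative - \<beta> (c * x) * surv (c * x) * c) (at x)"
    by simp
  from DERIV_mult[OF this one_minus_powr_has_derivative[OF assms(3)]] show ?thesis
    by (simp add: algebra_simps)
qed

lemma integral_hazard_surv_one_minus_powr:
  assumes "0 < c" "0 < a"
  shows "integral {0..1} (\<lambda>b. c * \<beta> (c * b) * surv (c * b) * (1 - b) powr a)
      = 1 - a * integral {0..1} (\<lambda>b. surv (c * b) * (1 - b) powr (a - 1))"
proof -
  define K where "K = (\<lambda>y. y / c) ` {y \<in> {0<..}. \<not> isCont \<beta> y}"
  define hazard where "hazard b = c * \<beta> (c * b) * surv (c * b) * (1 - b) powr a" for b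
  define density where "density b = surv (c * b) * (1 - b) powr (a - 1)" for b
  define F where "F b = surv (c * b) * (1 - b) powr a" for b
  have hazard_integrable: "hazard integrable_on {0..1}"
    using hazard_surv_integrable[of c a "\<lambda>_. 1" 1] assms by (simp add: hazard_def[abs_def])
  have density_integrable: "density integrable_on {0..1}"
    unfolding density_def using assms by (intro surv_scaled_integrable) auto
  have "integral {0..1} (\<lambda>b. - (hazard b + a * density b)) = F 1 - F 0"
  proof (rule fundamental_theorem_of_calculus_countable[where K = K])
    show "countable K"
      unfolding K_def by (rule countable_image[OF countable_discontinuities_beta])
    have "continuous_on {0..1} (\<lambda>b. surv (c * b))"
      using assms(1) by (intro continuous_on_compose2[OF continuous_on_surv] continuous_intros)
        (simp add: image_subset_iff)
    moreover have "continuous_on {0..1} (\<lambda>b. (1 - b) powr a)"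
      using assms(2) by (intro continuous_on_powr' continuous_intros) auto
    ultimately show "continuous_on {0..1} F"
      unfolding F_def by (rule continuous_on_mult)
    show "(\<lambda>b. - (hazard b + a * density b)) integrable_on {0..1}"
      using hazard_integrable density_integrable
      by (intro integrable_neg integrable_add integrable_on_mult_right)
  next
    fix x assume x: "x \<in> {0<..<1} - K"
    then have beta_cont: "isCont \<beta> (c * x)"
      unfolding K_def using assms(1) by (intro isCont_beta_scaled) auto
    with x assms(1) show "(F has_real_derivative - (hazard x + a * density x)) (at x)"
      unfolding F_def[abs_def] hazard_def density_def
      by (intro surv_scaled_one_minus_powr_has_derivative) auto
    have scale_cont: "isCont (\<lambda>b. c * b) x"
      by (intro continuous_intros)
    have "isCont surv (c * x)"
      using continuous_on_interior[OF continuous_on_surv] x assms(1) by simp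
    with isCont_o2[OF scale_cont] beta_cont show "isCont (\<lambda>b. - (hazard b + a * density b)) x"
      unfolding hazard_def[abs_def] density_def[abs_def] using x
      by (intro continuous_intros) simp_all
  qed simp
  moreover have "F 1 = 0" "F 0 = 1"
    using assms(2) by (simp_all add: F_def)
  moreover have "integral {0..1} (\<lambda>b. - (hazard b + a * density b))
      = - (integral {0..1} hazard + a * integral {0..1} density)"
    unfolding integral_neg integral_add[OF hazard_integrable integrable_on_mult_right[OF density_integrable]]
    by simp
  ultimately show ?thesis
    unfolding hazard_def[abs_def] density_def[abs_def] by linarith
qed

lemma integral_hazard_surv_split:
  assumes "0 < c" "0 < a"
  shows "integral {0..1} (\<lambda>b. c * \<beta> (c * b) * surv (c * b) * (1 - b) powr (a - 1))
      = integral {0..1} (\<lambda>b. c * \<beta> (c * b) * surv (c * b) * b * (1 - b) powr (a - 1))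
        + (1 - a * integral {0..1} (\<lambda>b. surv (c * b) * (1 - b) powr (a - 1)))"
proof -
  define moment where "moment b = c * \<beta> (c * b) * surv (c * b) * b * (1 - b) powr (a - 1)" for b
  define rest where "rest b = c * \<beta> (c * b) * surv (c * b) * (1 - b) powr a" for b
  have "moment integrable_on {0..1}" "rest integrable_on {0..1}"
    using hazard_surv_integrable[of c "a - 1" "\<lambda>b. b" 1] hazard_surv_integrable[of c a "\<lambda>_. 1" 1]
      assms id_borel_measurable_lebesgue_on
    by (auto simp: id_def moment_def[abs_def] rest_def[abs_def])
  have "integral {0..1} (\<lambda>b. c * \<beta> (c * b) * surv (c * b) * (1 - b) powr (a - 1))
      = integral {0..1} (\<lambda>b. moment b + rest b)"
  proof (rule integral_spike[OF negligible_sing])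
    fix b :: real assume "b \<in> {0..1} - {1}"
    then have power: "(1 - b) powr a = (1 - b) * (1 - b) powr (a - 1)"
      by (simp add: powr_mult_base)
    show "moment b + rest b = c * \<beta> (c * b) * surv (c * b) * (1 - b) powr (a - 1)"
      unfolding moment_def rest_def power by (simp add: algebra_simps)
  qed
  also have "\<dots> = integral {0..1} moment + integral {0..1} rest"
    by (rule integral_add) fact+
  finally show ?thesis
    using integral_hazard_surv_one_minus_powr[OF assms]
    by (simp add: moment_def[abs_def] rest_def[abs_def])
qed

end

locale normalised_profile = monotone_hazard +
  fixes \<mu> :: real and C :: "real \<Rightarrow> real" and W :: "real \<Rightarrow> real \<Rightarrow> real"
  assumes mu_pos: "0 < \<mu>"
    and W_def: "\<And>\<tau> b. 0 \<le> \<tau> \<Longrightarrow> 0 \<le> b \<Longrightarrow> b < 1 \<Longrightarrow>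
                  W \<tau> b = C \<tau> * exp (- B (exp \<tau> * b)) * (1 - b) powr (\<mu> - 1)"
    and C_pos: "\<And>\<tau>. 0 \<le> \<tau> \<Longrightarrow> 0 < C \<tau>"
    and C_norm: "\<And>\<tau>. 0 \<le> \<tau> \<Longrightarrow> ((\<lambda>b. W \<tau> b) has_integral 1) {0..1}"
begin

definition mass :: "real \<Rightarrow> real"
  where "mass \<tau> = integral {0..1} (\<lambda>b. surv (exp \<tau> * b) * (1 - b) powr (\<mu> - 1))"

definition flux :: "real \<Rightarrow> real"
  where "flux \<tau> =
    integral {0..1} (\<lambda>b. exp \<tau> * \<beta> (exp \<tau> * b) * surv (exp \<tau> * b) * b * (1 - b) powr (\<mu> - 1))"

lemma W_eq:
  "0 \<le> \<tau> \<Longrightarrow> 0 \<le> b \<Longrightarrow> b < 1 \<Longrightarrow> W \<tau> b = C \<tau> * surv (exp \<tau> * b) * (1 - b) powr (\<mu> - 1)"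
  by (simp add: W_def surv_def)

lemma C_mult_mass:
  assumes "0 \<le> \<tau>"
  shows "C \<tau> * mass \<tau> = 1"
proof -
  have "1 = integral {0..1} (W \<tau>)"
    using C_norm[OF assms] by (simp add: integral_unique)
  also have "\<dots> = integral {0..1} (\<lambda>b. C \<tau> * (surv (exp \<tau> * b) * (1 - b) powr (\<mu> - 1)))"
    by (rule integral_spike[where S="{1}"]) (use assms in \<open>auto simp: W_eq\<close>)
  also have "\<dots> = C \<tau> * mass \<tau>"
    by (simp add: mass_def)
  finally show ?thesis ..
qed

lemma mass_pos:
  assumes "0 \<le> \<tau>"
  shows "0 < mass \<tau>"
proof -
  have "0 < C \<tau> * mass \<tau>"
    using C_mult_mass[OF assms] by simp
  then show ?thesis
    using C_pos[OF assms] by (simp add: zero_less_mult_iff)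
qed

lemma C_eq_inverse_mass: "0 \<le> \<tau> \<Longrightarrow> C \<tau> = 1 / mass \<tau>"
  using C_mult_mass[of \<tau>] mass_pos[of \<tau>] by (simp add: field_simps)

lemma mass_has_derivative: "(mass has_real_derivative - flux \<tau>) (at \<tau>)"
proof -
  define N where "N = insert 0 ((\<lambda>y. y / exp \<tau>) ` {y \<in> {0<..}. \<not> isCont \<beta> y})"
  define g where "g b = M * exp (\<tau> + 1) * (1 - b) powr (\<mu> - 1)" for b
  have "((\<lambda>t. integral {0..1} (\<lambda>b. surv (exp t * b) * (1 - b) powr (\<mu> - 1))) has_real_derivative
      integral {0..1} (\<lambda>b. - \<beta> (exp \<tau> * b) * surv (exp \<tau> * b) * (exp \<tau> * b) * (1 - b) powr (\<mu> - 1)))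
      (at \<tau> within {\<tau> - 1..\<tau> + 1})"
  proof (rule has_real_derivative_integral_dominated)
    show "negligible N"
      unfolding N_def using countable_discontinuities_beta by (intro countable_imp_negligible) auto
    show "g integrable_on {0..1}"
      unfolding g_def using integrable_on_cmult_left[OF integrable_on_one_minus_powr] mu_pos
      by simp
    fix b :: real assume b: "b \<in> {0..1} - N"
    then have "isCont \<beta> (exp \<tau> * b)"
      unfolding N_def by (intro isCont_beta_scaled) auto
    then have "continuous (at (exp \<tau> * b) within {0..}) \<beta>"
      by (rule continuous_at_imp_continuous_within)
    with b have "((\<lambda>t. surv (exp t * b)) has_real_derivative
        - \<beta> (exp \<tau> * b) * surv (exp \<tau> * b) * (exp \<tau> * b)) (at \<tau> within {\<tau> - 1..\<tau> + 1})"
      by (intro surv_exp_scaled_has_derivative) simp_all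
    then show "((\<lambda>t. surv (exp t * b) * (1 - b) powr (\<mu> - 1)) has_real_derivative
        - \<beta> (exp \<tau> * b) * surv (exp \<tau> * b) * (exp \<tau> * b) * (1 - b) powr (\<mu> - 1))
        (at \<tau> within {\<tau> - 1..\<tau> + 1})"
      by (rule DERIV_cmult_right)
  next
    fix t b :: real assume "t \<in> {\<tau> - 1..\<tau> + 1}" "b \<in> {0..1}"
    then have "\<bar>surv (exp t * b) - surv (exp \<tau> * b)\<bar> * (1 - b) powr (\<mu> - 1)
        \<le> M * exp (\<tau> + 1) * \<bar>t - \<tau>\<bar> * (1 - b) powr (\<mu> - 1)"
      by (intro mult_right_mono surv_exp_scaled_lipschitz) auto
    then show "\<bar>surv (exp t * b) * (1 - b) powr (\<mu> - 1) - surv (exp \<tau> * b) * (1 - b) powr (\<mu> - 1)\<bar>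
        \<le> g b * \<bar>t - \<tau>\<bar>"
      by (simp add: g_def abs_mult left_diff_distrib[symmetric] mult_ac)
  qed (use mu_pos in \<open>auto intro: surv_scaled_integrable\<close>)
  moreover have "integral {0..1}
      (\<lambda>b. - \<beta> (exp \<tau> * b) * surv (exp \<tau> * b) * (exp \<tau> * b) * (1 - b) powr (\<mu> - 1)) = - flux \<tau>"
    by (simp add: flux_def mult_ac)
  ultimately show ?thesis
    by (simp add: mass_def[abs_def] at_within_Icc_at)
qed

lemma C_has_derivative:
  assumes "0 \<le> \<tau>"
  shows "(C has_real_derivative flux \<tau> * (C \<tau>)\<^sup>2) (at \<tau> within {0..})"
proof -
  have "((\<lambda>t. 1 / mass t) has_real_derivative - (- flux \<tau>) / (mass \<tau>)\<^sup>2) (at \<tau> within {0..})"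
    using DERIV_inverse_fun[OF has_field_derivative_at_within[OF mass_has_derivative]] mass_pos[OF assms]
    by (simp add: divide_inverse power2_eq_square)
  then have "((\<lambda>t. 1 / mass t) has_real_derivative flux \<tau> * (C \<tau>)\<^sup>2) (at \<tau> within {0..})"
    using C_eq_inverse_mass[OF assms] by (simp add: power2_eq_square)
  then show ?thesis
    by (rule has_field_derivative_transform_within[where d=1]) (use assms C_eq_inverse_mass in auto)
qed

lemma transport_equation:
  assumes "0 \<le> \<tau>" "0 \<le> b" "b < 1" and beta_cont: "continuous (at (exp \<tau> * b) within {0..}) \<beta>"
  shows "\<exists>Wt Wb. ((\<lambda>t. W t b) has_real_derivative Wt) (at \<tau> within {0..}) \<and>
           ((\<lambda>s. (1 - s) * W \<tau> s) has_real_derivative Wb) (at b within {0..<1}) \<and>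
           Wt + Wb + exp \<tau> * \<beta> (exp \<tau> * b) * W \<tau> b = W \<tau> b * C \<tau> * (flux \<tau> - \<mu> * mass \<tau>)"
proof (intro exI conjI)
  define y where "y = exp \<tau> * b"
  define p where "p = (1 - b) powr (\<mu> - 1)"
  have "((\<lambda>t. surv (exp t * b)) has_real_derivative - \<beta> y * surv y * (exp \<tau> * b)) (at \<tau> within {0..})"
    unfolding y_def using assms(2) beta_cont by (rule surv_exp_scaled_has_derivative)
  from DERIV_mult[OF C_has_derivative[OF assms(1)] this]
  have "((\<lambda>t. C t * surv (exp t * b) * p) has_real_derivative
      (flux \<tau> * (C \<tau>)\<^sup>2 * surv y + C \<tau> * (- \<beta> y * surv y * (exp \<tau> * b))) * p) (at \<tau> within {0..})"
    by (intro DERIV_cmult_right) (simp add: y_def mult.commute)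
  then show "((\<lambda>t. W t b) has_real_derivative
      (flux \<tau> * (C \<tau>)\<^sup>2 * surv y + C \<tau> * (- \<beta> y * surv y * (exp \<tau> * b))) * p) (at \<tau> within {0..})"
    by (rule has_field_derivative_transform_within[where d=1]) (use assms in \<open>auto simp: W_eq p_def\<close>)
  have "((\<lambda>s. surv (exp \<tau> * s)) has_real_derivative - \<beta> y * surv y * exp \<tau>) (at b within {0..<1})"
    using assms unfolding y_def
    by (intro surv_comp_has_derivative) (auto simp: image_subset_iff intro!: derivative_eq_intros)
  from DERIV_mult[OF this has_field_derivative_at_within[OF one_minus_powr_has_derivative[OF assms(3)]]]
  have "((\<lambda>s. C \<tau> * (surv (exp \<tau> * s) * (1 - s) powr \<mu>)) has_real_derivative
      C \<tau> * (- \<beta> y * surv y * exp \<tau> * (1 - b) powr \<mu> + - (\<mu> * p) * surv y)) (at b within {0..<1})"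
    by (intro DERIV_cmult) (simp add: y_def p_def)
  then show "((\<lambda>s. (1 - s) * W \<tau> s) has_real_derivative
      C \<tau> * (- \<beta> y * surv y * exp \<tau> * (1 - b) powr \<mu> + - (\<mu> * p) * surv y)) (at b within {0..<1})"
    by (rule has_field_derivative_transform_within[where d=1])
      (use assms in \<open>auto simp: W_eq powr_mult_base\<close>)
  have power: "(1 - b) powr \<mu> = (1 - b) * p"
    using assms by (simp add: p_def powr_mult_base)
  have W_b: "W \<tau> b = C \<tau> * surv y * p"
    using assms by (simp add: W_eq y_def p_def)
  have mass: "mass \<tau> = 1 / C \<tau>"
    using assms C_eq_inverse_mass C_pos[of \<tau>] by simp
  show "(flux \<tau> * (C \<tau>)\<^sup>2 * surv y + C \<tau> * (- \<beta> y * surv y * (exp \<tau> * b))) * p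
      + C \<tau> * (- \<beta> y * surv y * exp \<tau> * (1 - b) powr \<mu> + - (\<mu> * p) * surv y)
      + exp \<tau> * \<beta> (exp \<tau> * b) * W \<tau> b = W \<tau> b * C \<tau> * (flux \<tau> - \<mu> * mass \<tau>)"
    unfolding power W_b mass using C_pos[OF assms(1)]
    by (simp add: y_def field_simps power2_eq_square)
qed

lemma boundary_condition:
  assumes "0 \<le> \<tau>"
  shows "(\<lambda>b. exp \<tau> * \<beta> (exp \<tau> * b) * W \<tau> b) integrable_on {0..1}"
    and "W \<tau> 0 * (1 + (flux \<tau> - \<mu> * mass \<tau>))
      = integral {0..1} (\<lambda>b. exp \<tau> * \<beta> (exp \<tau> * b) * W \<tau> b)"
proof -
  define hazard where
    "hazard b = exp \<tau> * \<beta> (exp \<tau> * b) * surv (exp \<tau> * b) * (1 - b) powr (\<mu> - 1)" for b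
  have "hazard integrable_on {0..1}"
    using hazard_surv_integrable[of "exp \<tau>" "\<mu> - 1" "\<lambda>_. 1" 1] mu_pos
    by (simp add: hazard_def[abs_def])
  then have C_hazard_integrable: "(\<lambda>b. C \<tau> * hazard b) integrable_on {0..1}"
    by (rule integrable_on_mult_right)
  have W_hazard: "exp \<tau> * \<beta> (exp \<tau> * b) * W \<tau> b = C \<tau> * hazard b" if "b \<in> {0..1} - {1}" for b
    using that assms by (simp add: W_eq hazard_def)
  show "(\<lambda>b. exp \<tau> * \<beta> (exp \<tau> * b) * W \<tau> b) integrable_on {0..1}"
    by (rule integrable_spike[OF C_hazard_integrable negligible_sing]) (rule W_hazard)
  have "integral {0..1} (\<lambda>b. exp \<tau> * \<beta> (exp \<tau> * b) * W \<tau> b)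
      = integral {0..1} (\<lambda>b. C \<tau> * hazard b)"
    by (rule integral_spike[OF negligible_sing]) (rule W_hazard[symmetric])
  also have "\<dots> = C \<tau> * (flux \<tau> + (1 - \<mu> * mass \<tau>))"
    using integral_hazard_surv_split[of "exp \<tau>" \<mu>] mu_pos
    by (simp add: hazard_def[abs_def] flux_def mass_def)
  also have "\<dots> = W \<tau> 0 * (1 + (flux \<tau> - \<mu> * mass \<tau>))"
    using assms by (simp add: W_eq)
  finally show "W \<tau> 0 * (1 + (flux \<tau> - \<mu> * mass \<tau>))
      = integral {0..1} (\<lambda>b. exp \<tau> * \<beta> (exp \<tau> * b) * W \<tau> b)"
    by simp
qed

end

theorem proposition2:
  fixes \<mu> :: real and \<beta> B C :: "real \<Rightarrow> real" and W :: "real \<Rightarrow> real \<Rightarrow> real"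
  assumes mu: "0 < \<mu>" "\<mu> < 1"
    and beta_pos: "\<And>a. 0 \<le> a \<Longrightarrow> 0 < \<beta> a"
    and beta_bdd: "\<exists>M. \<forall>a\<ge>0. \<beta> a \<le> M"
    and beta_noninc: "\<And>x y. 0 \<le> x \<Longrightarrow> x \<le> y \<Longrightarrow> \<beta> y \<le> \<beta> x"
    and beta_lim: "((\<lambda>a. a * \<beta> a) \<longlongrightarrow> \<mu>) at_top"
    and B_def: "\<And>a. 0 \<le> a \<Longrightarrow> B a = integral {0..a} \<beta>"
    and W_def: "\<And>\<tau> b. 0 \<le> \<tau> \<Longrightarrow> 0 \<le> b \<Longrightarrow> b < 1 \<Longrightarrow>
                  W \<tau> b = C \<tau> * exp (- B (exp \<tau> * b)) * (1 - b) powr (\<mu> - 1)"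
    and C_pos: "\<And>\<tau>. 0 \<le> \<tau> \<Longrightarrow> 0 < C \<tau>"
    and C_norm: "\<And>\<tau>. 0 \<le> \<tau> \<Longrightarrow> ((\<lambda>b. W \<tau> b) has_integral 1) {0..1}"
  shows "\<exists>C'. (\<forall>\<tau>\<ge>0. (C has_real_derivative C' \<tau>) (at \<tau> within {0..})) \<and>
     (let \<delta> = (\<lambda>\<tau>. C' \<tau> / (C \<tau>)\<^sup>2 - \<mu> / C \<tau>) in
       (\<forall>\<tau> b. 0 \<le> \<tau> \<longrightarrow> 0 \<le> b \<longrightarrow> b < 1 \<longrightarrow>
          continuous (at (exp \<tau> * b) within {0..}) \<beta> \<longrightarrow>
          (\<exists>Wt Wb. ((\<lambda>t. W t b) has_real_derivative Wt) (at \<tau> within {0..}) \<and>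
                   ((\<lambda>s. (1 - s) * W \<tau> s) has_real_derivative Wb) (at b within {0..<1}) \<and>
                   Wt + Wb + exp \<tau> * \<beta> (exp \<tau> * b) * W \<tau> b = W \<tau> b * C \<tau> * \<delta> \<tau>)) \<and>
       (\<forall>\<tau>\<ge>0. (\<lambda>b. exp \<tau> * \<beta> (exp \<tau> * b) * W \<tau> b) integrable_on {0..1} \<and>
          W \<tau> 0 * (1 + \<delta> \<tau>) = integral {0..1} (\<lambda>b. exp \<tau> * \<beta> (exp \<tau> * b) * W \<tau> b)))"
proof -
  obtain M where "\<forall>a\<ge>0. \<beta> a \<le> M"
    using beta_bdd by blast
  then interpret normalised_profile \<beta> M B \<mu> C W
    using mu(1) beta_pos beta_noninc B_def W_def C_pos C_norm by unfold_locales auto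
  have delta: "flux \<tau> * (C \<tau>)\<^sup>2 / (C \<tau>)\<^sup>2 - \<mu> / C \<tau> = flux \<tau> - \<mu> * mass \<tau>" if "0 \<le> \<tau>" for \<tau>
    using C_pos[OF that] C_eq_inverse_mass[OF that] by simp
  show ?thesis
    unfolding Let_def
  proof (intro exI[of _ "\<lambda>\<tau>. flux \<tau> * (C \<tau>)\<^sup>2"] conjI allI impI)
    fix \<tau> :: real assume "0 \<le> \<tau>"
    then show "(C has_real_derivative flux \<tau> * (C \<tau>)\<^sup>2) (at \<tau> within {0..})"
      by (rule C_has_derivative)
    show "(\<lambda>b. exp \<tau> * \<beta> (exp \<tau> * b) * W \<tau> b) integrable_on {0..1}"
      using \<open>0 \<le> \<tau>\<close> by (rule boundary_condition)
    show "W \<tau> 0 * (1 + (flux \<tau> * (C \<tau>)\<^sup>2 / (C \<tau>)\<^sup>2 - \<mu> / C \<tau>))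
        = integral {0..1} (\<lambda>b. exp \<tau> * \<beta> (exp \<tau> * b) * W \<tau> b)"
      unfolding delta[OF \<open>0 \<le> \<tau>\<close>] using \<open>0 \<le> \<tau>\<close> by (rule boundary_condition)
  next
    fix \<tau> b :: real
    assume "0 \<le> \<tau>" "0 \<le> b" "b < 1" "continuous (at (exp \<tau> * b) within {0..}) \<beta>"
    then show "\<exists>Wt Wb. ((\<lambda>t. W t b) has_real_derivative Wt) (at \<tau> within {0..}) \<and>
        ((\<lambda>s. (1 - s) * W \<tau> s) has_real_derivative Wb) (at b within {0..<1}) \<and>
        Wt + Wb + exp \<tau> * \<beta> (exp \<tau> * b) * W \<tau> b
          = W \<tau> b * C \<tau> * (flux \<tau> * (C \<tau>)\<^sup>2 / (C \<tau>)\<^sup>2 - \<mu> / C \<tau>)"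
      unfolding delta[OF \<open>0 \<le> \<tau>\<close>] by (rule transport_equation)
  qed
qed

end
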